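(* Let $b\in L^m_{\mathrm{loc}}(\mathbb{R}^n)$, let $\mathcal{S}$ be a sparse family, $m$ a positive integer, $h\in\{0,\dots,m\}$, and $A$ a Young function. Then for every $x$, $$\mathcal{A}_{A,\mathcal{S}}^{m-h}(b,f)(x)\leq \sum_{Q\in \mathcal{S}} |b(x)-b_Q|^m \|f\|_{A,Q}\, \chi_Q(x) + \sum_{Q\in \mathcal{S}} \big\|f|b-b_Q|^m\big\|_{A,Q}\, \chi_Q(x),$$ where $\mathcal{A}_{A,\mathcal{S}}^{m-h}(b,f)(x)=\sum_{Q\in\mathcal{S}}|b(x)-b_Q|^{m-h}\,\big\|f|b-b_Q|^h\big\|_{A,Q}\chi_Q(x)$.
   Context: In $\mathbb{R}^n$; $b_Q=\frac1{|Q|}\int_Qb$; for a Young function $A$, $\|g\|_{A,Q}=\inf\{\lambda>0:\frac1{|Q|}\int_QA(|g|/\lambda)\le1\}$. A sparse family: cubes $Q$ with pairwise disjoint $E_Q\subset Q$, $|E_Q|\ge\eta|Q|$. *)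

theory Defs
  imports "HOL-Analysis.Analysis"
begin

definition is_cube :: "(real^'n) set \<Rightarrow> bool" where
  "is_cube Q \<longleftrightarrow> (\<exists>a r. r > 0 \<and> Q = {x. \<forall>i. a$i \<le> x$i \<and> x$i < a$i + r})"

definition avg :: "(real^'n \<Rightarrow> real) \<Rightarrow> (real^'n) set \<Rightarrow> real" where
  "avg b Q = (\<integral>x\<in>Q. b x \<partial>lebesgue) / measure lebesgue Q"

definition young_function :: "(real \<Rightarrow> real) \<Rightarrow> bool" where
  "young_function A \<longleftrightarrow> continuous_on {0..} A \<and> convex_on {0..} A \<and> mono_on {0..} A
     \<and> A 0 = 0 \<and> filterlim A at_top at_top"

text \<open>Luxemburg-type local norm ||g||_{A,Q}, valued in [0,\<infinity>] (Inf {} = \<infinity>).\<close>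
definition lux_norm :: "(real \<Rightarrow> real) \<Rightarrow> (real^'n \<Rightarrow> real) \<Rightarrow> (real^'n) set \<Rightarrow> ennreal" where
  "lux_norm A g Q = Inf {ennreal l | l. l > 0 \<and>
      ennreal (1 / measure lebesgue Q) * (\<integral>\<^sup>+x\<in>Q. ennreal (A (\<bar>g x\<bar> / l)) \<partial>lebesgue) \<le> 1}"

definition sparse_family :: "real \<Rightarrow> (real^'n) set set \<Rightarrow> bool" where
  "sparse_family \<eta> S \<longleftrightarrow> 0 < \<eta> \<and> \<eta> < 1 \<and> (\<forall>Q\<in>S. is_cube Q) \<and>
     (\<exists>E. (\<forall>Q\<in>S. E Q \<in> sets lebesgue \<and> E Q \<subseteq> Q \<and> \<eta> * measure lebesgue Q \<le> measure lebesgue (E Q)) \<and>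
          (\<forall>Q\<in>S. \<forall>Q'\<in>S. Q \<noteq> Q' \<longrightarrow> E Q \<inter> E Q' = {}))"

definition Lloc :: "nat \<Rightarrow> (real^'n \<Rightarrow> real) \<Rightarrow> bool" where
  "Lloc m b \<longleftrightarrow> b \<in> borel_measurable lebesgue \<and>
     (\<forall>K. compact K \<longrightarrow> set_integrable lebesgue K (\<lambda>x. \<bar>b x\<bar> ^ m))"

text \<open>Sparse operator A^{k}_{A,S}(b,f)(x) with k = m-h; sum over S as a
  nonnegative (possibly infinite) sum.\<close>
definition sparse_op :: "(real \<Rightarrow> real) \<Rightarrow> (real^'n) set set \<Rightarrow> nat \<Rightarrow> nat \<Rightarrow>
    (real^'n \<Rightarrow> real) \<Rightarrow> (real^'n \<Rightarrow> real) \<Rightarrow> real^'n \<Rightarrow> ennreal" where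
  "sparse_op A S m h b f x = (\<integral>\<^sup>+Q. ennreal (\<bar>b x - avg b Q\<bar> ^ (m - h))
      * lux_norm A (\<lambda>y. f y * \<bar>b y - avg b Q\<bar> ^ h) Q * indicator Q x \<partial>count_space S)"

end

theory Submission
  imports Defs
begin

(*
  Fix a cube Q and put t = |b x - b_Q| and w = |b - b_Q|.  Pointwise
  t^(m-h) w^h <= max t w ^ m <= t^m + w^m.  The Luxemburg norm is absolutely
  homogeneous, and by convexity of A it satisfies ||g|| <= ||g1|| + ||g2||
  whenever |g| <= |g1| + |g2|.  Hence
  t^(m-h) ||f w^h|| = ||t^(m-h) f w^h|| <= t^m ||f|| + ||f w^m||
  on every cube, and summing over S gives the claim.  Sparseness and local
  integrability of b are needed only for measurability.
*)

lemma Inf_ennreal_add_const: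
  fixes X :: "ennreal set"
  assumes "X \<noteq> {}"
  shows "Inf X + c = (INF x\<in>X. x + c)"
  using continuous_at_Inf_mono[of "\<lambda>x. x + c" X] continuous_add[of "at_right (Inf X)" "\<lambda>x. x" "\<lambda>x. c"] assms
  by (auto simp: mono_def)

lemma le_Inf_add_Inf_ennreal:
  fixes X Y :: "ennreal set"
  assumes "\<And>x y. x \<in> X \<Longrightarrow> y \<in> Y \<Longrightarrow> z \<le> x + y"
  shows "z \<le> Inf X + Inf Y"
proof (cases "X = {} \<or> Y = {}")
  case True
  then show ?thesis by auto
next
  case False
  have "z \<le> Inf X + y" if "y \<in> Y" for y
  proof -
    have "z \<le> (INF x\<in>X. x + y)" by (rule Inf_greatest) (auto intro: assms that)
    then show ?thesis using Inf_ennreal_add_const[of X y] False by simp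
  qed
  then have "z \<le> (INF y\<in>Y. Inf X + y)"
    by (auto intro!: Inf_greatest)
  also have "\<dots> = Inf X + Inf Y"
    using Inf_ennreal_add_const[of Y "Inf X"] False by (simp add: add.commute)
  finally show ?thesis .
qed

lemma Inf_ennreal_cmult:
  fixes X :: "ennreal set"
  assumes "c \<noteq> 0" "c < top"
  shows "c * Inf X = (INF x\<in>X. c * x)"
proof (cases "X = {}")
  case True
  then show ?thesis using assms(1) by (simp add: ennreal_mult_top)
next
  case False
  have "continuous_on UNIV (\<lambda>x. c * x)"
    using ennreal_continuous_on_cmult[OF assms(2) continuous_on_id] by simp
  then have "continuous (at_right (Inf X)) (\<lambda>x. c * x)"
    unfolding continuous_on_eq_continuous_within by (metis UNIV_I continuous_within_subset subset_UNIV)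
  then show ?thesis
    using continuous_at_Inf_mono[of "\<lambda>x. c * x" X] False by (auto simp: mono_def mult_left_mono)
qed

lemma Inf_ennreal_pos_eq_0: "Inf {ennreal l |l. l > 0} = 0"
  by (rule antisym, rule ennreal_le_epsilon) (auto intro!: Inf_lower2)

lemma is_cube_sets_lebesgue:
  assumes "is_cube Q"
  shows "Q \<in> sets lebesgue"
proof -
  obtain a r where Q: "Q = {x. \<forall>i. a$i \<le> x$i \<and> x$i < a$i + r}"
    using assms unfolding is_cube_def by auto
  have "Q \<in> sets borel" unfolding Q by measurable
  then show ?thesis by simp
qed

lemma sparse_family_sets_lebesgue: "sparse_family \<eta> S \<Longrightarrow> Q \<in> S \<Longrightarrow> Q \<in> sets lebesgue"
  unfolding sparse_family_def using is_cube_sets_lebesgue by blast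

lemma young_function_nonneg: "young_function A \<Longrightarrow> 0 \<le> s \<Longrightarrow> 0 \<le> A s"
  unfolding young_function_def by (metis atLeast_iff mono_onD order_refl)

lemma borel_measurable_young_function_div:
  assumes "young_function A" "g \<in> borel_measurable M" "0 \<le> l"
  shows "(\<lambda>x. A (\<bar>g x\<bar> / l)) \<in> borel_measurable M"
proof -
  have "continuous_on {0..} A"
    using assms(1) unfolding young_function_def by simp
  then have "continuous_on UNIV (\<lambda>s. A (max 0 s))"
    by (rule continuous_on_compose2) (auto intro: continuous_on_max continuous_on_const continuous_on_id)
  moreover have "(\<lambda>x. \<bar>g x\<bar> / l) \<in> borel_measurable M"
    using assms(2) by measurable
  ultimately have "(\<lambda>x. A (max 0 (\<bar>g x\<bar> / l))) \<in> borel_measurable M"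
    by (rule borel_measurable_continuous_on)
  then show ?thesis using assms(3) by (simp add: max_absorb2)
qed

lemma young_function_div_add_le:
  assumes A: "young_function A" and l: "0 < l\<^sub>1" "0 < l\<^sub>2"
    and u: "0 \<le> u\<^sub>1" "0 \<le> u\<^sub>2" "0 \<le> u" "u \<le> u\<^sub>1 + u\<^sub>2"
  shows "A (u / (l\<^sub>1 + l\<^sub>2)) \<le> l\<^sub>1 / (l\<^sub>1 + l\<^sub>2) * A (u\<^sub>1 / l\<^sub>1) + l\<^sub>2 / (l\<^sub>1 + l\<^sub>2) * A (u\<^sub>2 / l\<^sub>2)"
proof -
  define L where "L = l\<^sub>1 + l\<^sub>2"
  have L: "0 < L" using l by (simp add: L_def)
  have "l\<^sub>1 / L + l\<^sub>2 / L = 1"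
    using L unfolding add_divide_distrib[symmetric] L_def by simp
  moreover have "0 \<le> l\<^sub>1 / L" "0 \<le> l\<^sub>2 / L" using l L by simp_all
  ultimately have w: "0 \<le> l\<^sub>2 / L" "l\<^sub>2 / L \<le> 1" "1 - l\<^sub>2 / L = l\<^sub>1 / L" by linarith+
  have "A (u / L) \<le> A ((u\<^sub>1 + u\<^sub>2) / L)"
    using A L u unfolding young_function_def by (auto intro!: mono_onD[of "{0..}" A] divide_right_mono)
  also have "(u\<^sub>1 + u\<^sub>2) / L = (1 - l\<^sub>2 / L) *\<^sub>R (u\<^sub>1 / l\<^sub>1) + (l\<^sub>2 / L) *\<^sub>R (u\<^sub>2 / l\<^sub>2)"
    using l unfolding w(3) by (simp add: add_divide_distrib)
  also have "A \<dots> \<le> (1 - l\<^sub>2 / L) * A (u\<^sub>1 / l\<^sub>1) + l\<^sub>2 / L * A (u\<^sub>2 / l\<^sub>2)"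
    using A l u w unfolding young_function_def by (intro convex_onD[of "{0..}" A]) auto
  finally show ?thesis unfolding w(3) unfolding L_def .
qed

lemma set_nn_integral_young_function_div_add_le:
  assumes A: "young_function A" and Q: "Q \<in> sets M"
    and g: "g\<^sub>1 \<in> borel_measurable M" "g\<^sub>2 \<in> borel_measurable M"
    and le: "\<And>y. \<bar>g y\<bar> \<le> \<bar>g\<^sub>1 y\<bar> + \<bar>g\<^sub>2 y\<bar>" and l: "0 < l\<^sub>1" "0 < l\<^sub>2"
  shows "(\<integral>\<^sup>+x\<in>Q. ennreal (A (\<bar>g x\<bar> / (l\<^sub>1 + l\<^sub>2))) \<partial>M)
    \<le> ennreal (l\<^sub>1 / (l\<^sub>1 + l\<^sub>2)) * (\<integral>\<^sup>+x\<in>Q. ennreal (A (\<bar>g\<^sub>1 x\<bar> / l\<^sub>1)) \<partial>M)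
      + ennreal (l\<^sub>2 / (l\<^sub>1 + l\<^sub>2)) * (\<integral>\<^sup>+x\<in>Q. ennreal (A (\<bar>g\<^sub>2 x\<bar> / l\<^sub>2)) \<partial>M)"
proof -
  define t\<^sub>1 t\<^sub>2 where "t\<^sub>1 = l\<^sub>1 / (l\<^sub>1 + l\<^sub>2)" and "t\<^sub>2 = l\<^sub>2 / (l\<^sub>1 + l\<^sub>2)"
  define F\<^sub>1 F\<^sub>2 where "F\<^sub>1 x = ennreal (A (\<bar>g\<^sub>1 x\<bar> / l\<^sub>1))" and "F\<^sub>2 x = ennreal (A (\<bar>g\<^sub>2 x\<bar> / l\<^sub>2))" for x
  have t: "0 \<le> t\<^sub>1" "0 \<le> t\<^sub>2"
    using l by (simp_all add: t\<^sub>1_def t\<^sub>2_def)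
  have pointwise: "ennreal (A (\<bar>g x\<bar> / (l\<^sub>1 + l\<^sub>2))) \<le> ennreal t\<^sub>1 * F\<^sub>1 x + ennreal t\<^sub>2 * F\<^sub>2 x" for x
  proof -
    have "A (\<bar>g x\<bar> / (l\<^sub>1 + l\<^sub>2)) \<le> t\<^sub>1 * A (\<bar>g\<^sub>1 x\<bar> / l\<^sub>1) + t\<^sub>2 * A (\<bar>g\<^sub>2 x\<bar> / l\<^sub>2)"
      unfolding t\<^sub>1_def t\<^sub>2_def using young_function_div_add_le[OF A l] le[of x] by simp
    then have "ennreal (A (\<bar>g x\<bar> / (l\<^sub>1 + l\<^sub>2)))
        \<le> ennreal (t\<^sub>1 * A (\<bar>g\<^sub>1 x\<bar> / l\<^sub>1) + t\<^sub>2 * A (\<bar>g\<^sub>2 x\<bar> / l\<^sub>2))"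
      by (rule ennreal_leI)
    also have "\<dots> = ennreal t\<^sub>1 * F\<^sub>1 x + ennreal t\<^sub>2 * F\<^sub>2 x"
      using t l young_function_nonneg[OF A, of "\<bar>g\<^sub>1 x\<bar> / l\<^sub>1"] young_function_nonneg[OF A, of "\<bar>g\<^sub>2 x\<bar> / l\<^sub>2"]
      by (simp add: F\<^sub>1_def F\<^sub>2_def ennreal_plus ennreal_mult)
    finally show ?thesis .
  qed
  have "F\<^sub>1 \<in> borel_measurable M" "F\<^sub>2 \<in> borel_measurable M"
    unfolding F\<^sub>1_def F\<^sub>2_def
    using borel_measurable_young_function_div[OF A g(1) less_imp_le[OF l(1)]]
      borel_measurable_young_function_div[OF A g(2) less_imp_le[OF l(2)]] by measurable
  moreover have "(\<integral>\<^sup>+x\<in>Q. ennreal (A (\<bar>g x\<bar> / (l\<^sub>1 + l\<^sub>2))) \<partial>M)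
      \<le> (\<integral>\<^sup>+x. ennreal t\<^sub>1 * (F\<^sub>1 x * indicator Q x) + ennreal t\<^sub>2 * (F\<^sub>2 x * indicator Q x) \<partial>M)"
    using pointwise by (intro nn_integral_mono) (simp split: split_indicator)
  ultimately show ?thesis
    using Q unfolding t\<^sub>1_def t\<^sub>2_def F\<^sub>1_def F\<^sub>2_def by (simp add: nn_integral_add nn_integral_cmult)
qed

definition lux_admissible :: "(real \<Rightarrow> real) \<Rightarrow> (real^'n \<Rightarrow> real) \<Rightarrow> (real^'n) set \<Rightarrow> real \<Rightarrow> bool" where
  "lux_admissible A g Q l \<longleftrightarrow> l > 0 \<and>
     ennreal (1 / measure lebesgue Q) * (\<integral>\<^sup>+x\<in>Q. ennreal (A (\<bar>g x\<bar> / l)) \<partial>lebesgue) \<le> 1"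

lemma lux_norm_eq_Inf_admissible: "lux_norm A g Q = Inf (ennreal ` Collect (lux_admissible A g Q))"
  unfolding lux_norm_def lux_admissible_def by (simp add: setcompr_eq_image)

lemma lux_admissible_cmult_iff:
  assumes "c \<noteq> 0"
  shows "lux_admissible A (\<lambda>y. c * g y) Q (\<bar>c\<bar> * l) \<longleftrightarrow> lux_admissible A g Q l"
  using assms by (simp add: lux_admissible_def abs_mult zero_less_mult_iff)

lemma lux_norm_cmult:
  assumes "A 0 = 0"
  shows "lux_norm A (\<lambda>y. c * g y) Q = ennreal \<bar>c\<bar> * lux_norm A g Q"
proof (cases "c = 0")
  case True
  then show ?thesis using assms by (simp add: lux_norm_def Inf_ennreal_pos_eq_0)
next
  case False
  let ?L = "Collect (lux_admissible A g Q)"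
  have scaled: "Collect (lux_admissible A (\<lambda>y. c * g y) Q) = (\<lambda>l. \<bar>c\<bar> * l) ` ?L"
  proof (intro equalityI subsetI)
    fix l assume "l \<in> Collect (lux_admissible A (\<lambda>y. c * g y) Q)"
    then have "l / \<bar>c\<bar> \<in> ?L"
      using lux_admissible_cmult_iff[OF False, of A g Q "l / \<bar>c\<bar>"] False by simp
    then show "l \<in> (\<lambda>l. \<bar>c\<bar> * l) ` ?L"
      using False by (intro image_eqI[of _ _ "l / \<bar>c\<bar>"]) auto
  next
    fix l assume "l \<in> (\<lambda>l. \<bar>c\<bar> * l) ` ?L"
    then obtain l' where "l = \<bar>c\<bar> * l'" "lux_admissible A g Q l'" by auto
    then show "l \<in> Collect (lux_admissible A (\<lambda>y. c * g y) Q)"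
      by (simp add: lux_admissible_cmult_iff[OF False])
  qed
  have "ennreal ` Collect (lux_admissible A (\<lambda>y. c * g y) Q) = (\<lambda>l. ennreal (\<bar>c\<bar> * l)) ` ?L"
    unfolding scaled image_image ..
  also have "\<dots> = (\<lambda>l. ennreal \<bar>c\<bar> * ennreal l) ` ?L"
    by (intro image_cong) (auto simp: lux_admissible_def ennreal_mult)
  also have "\<dots> = (\<lambda>z. ennreal \<bar>c\<bar> * z) ` ennreal ` ?L"
    unfolding image_image ..
  finally have "lux_norm A (\<lambda>y. c * g y) Q = Inf ((\<lambda>z. ennreal \<bar>c\<bar> * z) ` ennreal ` ?L)"
    by (simp only: lux_norm_eq_Inf_admissible)
  also have "\<dots> = ennreal \<bar>c\<bar> * lux_norm A g Q"
    unfolding lux_norm_eq_Inf_admissible using False by (intro Inf_ennreal_cmult[symmetric]) auto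
  finally show ?thesis .
qed

lemma lux_admissible_add:
  assumes A: "young_function A" and Q: "Q \<in> sets lebesgue"
    and g: "g\<^sub>1 \<in> borel_measurable lebesgue" "g\<^sub>2 \<in> borel_measurable lebesgue"
    and le: "\<And>y. \<bar>g y\<bar> \<le> \<bar>g\<^sub>1 y\<bar> + \<bar>g\<^sub>2 y\<bar>"
    and adm: "lux_admissible A g\<^sub>1 Q l\<^sub>1" "lux_admissible A g\<^sub>2 Q l\<^sub>2"
  shows "lux_admissible A g Q (l\<^sub>1 + l\<^sub>2)"
proof -
  define c where "c = ennreal (1 / measure lebesgue Q)"
  define t\<^sub>1 t\<^sub>2 where "t\<^sub>1 = ennreal (l\<^sub>1 / (l\<^sub>1 + l\<^sub>2))" and "t\<^sub>2 = ennreal (l\<^sub>2 / (l\<^sub>1 + l\<^sub>2))"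
  define I I\<^sub>1 I\<^sub>2 where "I = (\<integral>\<^sup>+x\<in>Q. ennreal (A (\<bar>g x\<bar> / (l\<^sub>1 + l\<^sub>2))) \<partial>lebesgue)"
    and "I\<^sub>1 = (\<integral>\<^sup>+x\<in>Q. ennreal (A (\<bar>g\<^sub>1 x\<bar> / l\<^sub>1)) \<partial>lebesgue)"
    and "I\<^sub>2 = (\<integral>\<^sup>+x\<in>Q. ennreal (A (\<bar>g\<^sub>2 x\<bar> / l\<^sub>2)) \<partial>lebesgue)"
  have l: "0 < l\<^sub>1" "0 < l\<^sub>2" and bound: "c * I\<^sub>1 \<le> 1" "c * I\<^sub>2 \<le> 1"
    using adm by (auto simp: lux_admissible_def c_def I\<^sub>1_def I\<^sub>2_def)
  have "l\<^sub>1 / (l\<^sub>1 + l\<^sub>2) + l\<^sub>2 / (l\<^sub>1 + l\<^sub>2) = 1"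
    using l by (simp flip: add_divide_distrib)
  then have t: "t\<^sub>1 + t\<^sub>2 = 1"
    using l unfolding t\<^sub>1_def t\<^sub>2_def by (metis ennreal_1 ennreal_plus divide_nonneg_pos less_imp_le add_pos_pos)
  have "c * I \<le> c * (t\<^sub>1 * I\<^sub>1 + t\<^sub>2 * I\<^sub>2)"
    unfolding I_def I\<^sub>1_def I\<^sub>2_def t\<^sub>1_def t\<^sub>2_def
    by (intro mult_left_mono set_nn_integral_young_function_div_add_le[OF A Q g le l]) simp
  also have "\<dots> = t\<^sub>1 * (c * I\<^sub>1) + t\<^sub>2 * (c * I\<^sub>2)"
    by (simp add: algebra_simps)
  also have "\<dots> \<le> t\<^sub>1 * 1 + t\<^sub>2 * 1"
    using bound by (intro add_mono mult_left_mono) auto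
  finally have "c * I \<le> 1"
    using t by simp
  then show ?thesis
    using l unfolding lux_admissible_def c_def I_def by simp
qed

lemma lux_norm_triangle:
  assumes A: "young_function A" and Q: "Q \<in> sets lebesgue"
    and g: "g\<^sub>1 \<in> borel_measurable lebesgue" "g\<^sub>2 \<in> borel_measurable lebesgue"
    and le: "\<And>y. \<bar>g y\<bar> \<le> \<bar>g\<^sub>1 y\<bar> + \<bar>g\<^sub>2 y\<bar>"
  shows "lux_norm A g Q \<le> lux_norm A g\<^sub>1 Q + lux_norm A g\<^sub>2 Q"
  unfolding lux_norm_eq_Inf_admissible
proof (rule le_Inf_add_Inf_ennreal, safe)
  fix l\<^sub>1 l\<^sub>2 assume adm: "lux_admissible A g\<^sub>1 Q l\<^sub>1" "lux_admissible A g\<^sub>2 Q l\<^sub>2"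
  then have "ennreal (l\<^sub>1 + l\<^sub>2) \<in> ennreal ` Collect (lux_admissible A g Q)"
    by (intro imageI CollectI lux_admissible_add[OF A Q g le])
  then have "Inf (ennreal ` Collect (lux_admissible A g Q)) \<le> ennreal (l\<^sub>1 + l\<^sub>2)"
    by (rule Inf_lower)
  then show "Inf (ennreal ` Collect (lux_admissible A g Q)) \<le> ennreal l\<^sub>1 + ennreal l\<^sub>2"
    using adm by (simp add: lux_admissible_def)
qed

lemma power_diff_mult_power_le_add:
  fixes s t :: real
  assumes "0 \<le> s" "0 \<le> t" "h \<le> m"
  shows "t ^ (m - h) * s ^ h \<le> t ^ m + s ^ m"
proof -
  have "t ^ (m - h) * s ^ h \<le> max t s ^ (m - h) * max t s ^ h"
    using assms by (intro mult_mono power_mono) auto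
  also have "\<dots> = max t s ^ m"
    using assms(3) by (simp flip: power_add)
  also have "\<dots> \<le> t ^ m + s ^ m"
    using assms(1,2) by (cases "s \<le> t") (auto simp: max_def)
  finally show ?thesis .
qed

lemma lux_norm_mixed_power_le:
  assumes A: "young_function A" and Q: "Q \<in> sets lebesgue"
    and f: "f \<in> borel_measurable lebesgue" and w: "w \<in> borel_measurable lebesgue"
    and "0 \<le> t" "h \<le> m"
  shows "ennreal (t ^ (m - h)) * lux_norm A (\<lambda>y. f y * \<bar>w y\<bar> ^ h) Q
    \<le> ennreal (t ^ m) * lux_norm A f Q + lux_norm A (\<lambda>y. f y * \<bar>w y\<bar> ^ m) Q"
proof -
  have A0: "A 0 = 0" using A by (simp add: young_function_def)
  have "ennreal (t ^ (m - h)) * lux_norm A (\<lambda>y. f y * \<bar>w y\<bar> ^ h) Q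
      = lux_norm A (\<lambda>y. t ^ (m - h) * (f y * \<bar>w y\<bar> ^ h)) Q"
    using \<open>0 \<le> t\<close> by (simp add: lux_norm_cmult[of A, OF A0])
  also have "\<dots> \<le> lux_norm A (\<lambda>y. t ^ m * f y) Q + lux_norm A (\<lambda>y. f y * \<bar>w y\<bar> ^ m) Q"
  proof (rule lux_norm_triangle[OF A Q])
    show "(\<lambda>y. t ^ m * f y) \<in> borel_measurable lebesgue"
      "(\<lambda>y. f y * \<bar>w y\<bar> ^ m) \<in> borel_measurable lebesgue"
      using f w by measurable
    fix y
    have "\<bar>f y\<bar> * (t ^ (m - h) * \<bar>w y\<bar> ^ h) \<le> \<bar>f y\<bar> * (t ^ m + \<bar>w y\<bar> ^ m)"
      using power_diff_mult_power_le_add[of "\<bar>w y\<bar>" t h m] assms(5,6) by (simp add: mult_left_mono)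
    then show "\<bar>t ^ (m - h) * (f y * \<bar>w y\<bar> ^ h)\<bar> \<le> \<bar>t ^ m * f y\<bar> + \<bar>f y * \<bar>w y\<bar> ^ m\<bar>"
      using \<open>0 \<le> t\<close> by (simp add: abs_mult distrib_left mult_ac)
  qed
  also have "\<dots> = ennreal (t ^ m) * lux_norm A f Q + lux_norm A (\<lambda>y. f y * \<bar>w y\<bar> ^ m) Q"
    using \<open>0 \<le> t\<close> by (simp add: lux_norm_cmult[of A, OF A0])
  finally show ?thesis .
qed

theorem lemma3p8:
  fixes b f :: "real^'n \<Rightarrow> real" and S :: "(real^'n) set set" and A :: "real \<Rightarrow> real"
    and m h :: nat and \<eta> :: real
  assumes "Lloc m b" and "f \<in> borel_measurable lebesgue"
    and "sparse_family \<eta> S" and "m \<ge> 1" and "h \<le> m" and "young_function A"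
  shows "sparse_op A S m h b f x \<le>
      (\<integral>\<^sup>+Q. ennreal (\<bar>b x - avg b Q\<bar> ^ m) * lux_norm A f Q * indicator Q x \<partial>count_space S)
    + (\<integral>\<^sup>+Q. lux_norm A (\<lambda>y. f y * \<bar>b y - avg b Q\<bar> ^ m) Q * indicator Q x \<partial>count_space S)"
proof -
  have b: "b \<in> borel_measurable lebesgue"
    using assms(1) by (simp add: Lloc_def)
  have "sparse_op A S m h b f x \<le>
      (\<integral>\<^sup>+Q. ennreal (\<bar>b x - avg b Q\<bar> ^ m) * lux_norm A f Q * indicator Q x
         + lux_norm A (\<lambda>y. f y * \<bar>b y - avg b Q\<bar> ^ m) Q * indicator Q x \<partial>count_space S)"
    unfolding sparse_op_def
  proof (rule nn_integral_mono)
    fix Q assume "Q \<in> space (count_space S)"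
    then have "Q \<in> sets lebesgue"
      using sparse_family_sets_lebesgue[OF assms(3)] by simp
    from lux_norm_mixed_power_le[OF assms(6) this assms(2), of "\<lambda>y. b y - avg b Q" "\<bar>b x - avg b Q\<bar>" h m]
    show "ennreal (\<bar>b x - avg b Q\<bar> ^ (m - h)) * lux_norm A (\<lambda>y. f y * \<bar>b y - avg b Q\<bar> ^ h) Q * indicator Q x
      \<le> ennreal (\<bar>b x - avg b Q\<bar> ^ m) * lux_norm A f Q * indicator Q x
         + lux_norm A (\<lambda>y. f y * \<bar>b y - avg b Q\<bar> ^ m) Q * indicator Q x"
      using b assms(5) by (cases "x \<in> Q") auto
  qed
  also have "\<dots> = (\<integral>\<^sup>+Q. ennreal (\<bar>b x - avg b Q\<bar> ^ m) * lux_norm A f Q * indicator Q x \<partial>count_space S)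
    + (\<integral>\<^sup>+Q. lux_norm A (\<lambda>y. f y * \<bar>b y - avg b Q\<bar> ^ m) Q * indicator Q x \<partial>count_space S)"
    by (rule nn_integral_add) auto
  finally show ?thesis .
qed

end
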